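(* Let $\{A_n\}_{n\geq1}$ be an increasing sequence of finite sets of isolated points of $\mathbb{R}^2$ with $f(n)=\sharp A_n\to+\infty$, $S=\bigcup_n A_n$, and $\{Z(x):x\in S\}$ a random field whose variables all have distribution function $F$. Let $\tau>0$ and $\{u_n(\tau)\}$ be reals with $E\big(\sum_{x\in A_n}\mathbf{1}_{\{Z(x)>u_n(\tau)\}}\big)\to\tau$. For each $n$ let $\mathcal{B}_n=\{B_n^{(s,t)}:s,t=1,\dots,k_n\}$ be a family of $k_n^2$ pairwise disjoint subsets of $A_n$ with $\sharp B_n^{(s,t)}\sim f(n)/k_n^2$ and $P(\bigvee_{x\in A_n}Z(x)\le u_n(\tau))-\prod_{s,t}P(\bigvee_{x\in B_n^{(s,t)}}Z(x)\le u_n(\tau))\to0$. Suppose $\mathbf{Z}_A=\{Z(x):x\in A_n\}_{n\ge1}$ satisfies conditions $D'(u_n(\tau),\mathcal{B}_n)$ and $D(u_n(\tau),k_n,l_n)$. Then $$P\Big(\bigvee_{x\in A_n}Z(x)\le u_n(\tau)\Big)\longrightarrow e^{-\tau}\quad(n\to\infty).$$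
   Context: $\bigvee$ is maximum; $\pi_1,\pi_2$ coordinate projections; $f_i(n)=\sharp\pi_i(A_n)$. Condition $D'(u_n,\mathcal B_n)$: $\sum_{B\in\mathcal B_n}\sum_{x,y\in B,\,x\neq y}P(Z(x)>u_n,Z(y)>u_n)\to0$ as $n\to\infty$. The pair $(I,J)$ is in $\mathcal{S}(\pi_i(A_n),l_n)$ if $I,J$ are sets of consecutive values of $\pi_i(A_n)$ separated by at least $l_n$ values of $\pi_i(A_n)$. Condition $D(u_n,k_n,l_n)$: there are positive integer sequences $l_n\to\infty$, $k_n\to\infty$ with $k_nl_nf_i(n)/f(n)\to0$ ($i=1,2$) and $k_n^2\alpha(l_n,u_n)\to0$, where $\alpha(l_n,u_n)=\sup|P(\bigvee_{x\in C\cup D}Z(x)\le u_n)-P(\bigvee_{x\in C}Z(x)\le u_n)P(\bigvee_{x\in D}Z(x)\le u_n)|$ over subsets $C,D\subseteq A_n$ whose $\pi_i$-projections form a pair in $\mathcal{S}(\pi_i(A_n),l_n)$ for each $i$. *)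

theory Defs
  imports "HOL-Probability.Probability"
begin

type_synonym point = "real \<times> real"

definition max_le_event :: "'a measure \<Rightarrow> (point \<Rightarrow> 'a \<Rightarrow> real) \<Rightarrow> point set \<Rightarrow> real \<Rightarrow> 'a set" where
  "max_le_event M Z C u = {\<omega> \<in> space M. \<forall>x\<in>C. Z x \<omega> \<le> u}"

definition consecutive_in :: "real set \<Rightarrow> real set \<Rightarrow> bool" where
  "consecutive_in I P \<longleftrightarrow> I \<subseteq> P \<and>
     (\<forall>a\<in>I. \<forall>c\<in>I. \<forall>b\<in>P. a \<le> b \<and> b \<le> c \<longrightarrow> b \<in> I)"

definition sep_pairs :: "real set \<Rightarrow> nat \<Rightarrow> (real set \<times> real set) set" where
  "sep_pairs P l = {(I, J). consecutive_in I P \<and> consecutive_in J P \<and>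
     ((\<forall>a\<in>I. \<forall>b\<in>J. a < b \<and> card {p\<in>P. a < p \<and> p < b} \<ge> l) \<or>
      (\<forall>a\<in>I. \<forall>b\<in>J. b < a \<and> card {p\<in>P. b < p \<and> p < a} \<ge> l))}"

definition adm_pairs :: "point set \<Rightarrow> nat \<Rightarrow> (point set \<times> point set) set" where
  "adm_pairs A l = {(C, D). C \<subseteq> A \<and> D \<subseteq> A \<and>
     (fst ` C, fst ` D) \<in> sep_pairs (fst ` A) l \<and>
     (snd ` C, snd ` D) \<in> sep_pairs (snd ` A) l}"

definition mixing_alpha :: "'a measure \<Rightarrow> (point \<Rightarrow> 'a \<Rightarrow> real) \<Rightarrow> point set \<Rightarrow> nat \<Rightarrow> real \<Rightarrow> real" where
  "mixing_alpha M Z A l u = (SUP p \<in> adm_pairs A l.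
      \<bar>measure M (max_le_event M Z (fst p \<union> snd p) u)
        - measure M (max_le_event M Z (fst p) u) * measure M (max_le_event M Z (snd p) u)\<bar>)"

definition cond_D' :: "'a measure \<Rightarrow> (point \<Rightarrow> 'a \<Rightarrow> real) \<Rightarrow> (nat \<Rightarrow> real) \<Rightarrow>
    (nat \<Rightarrow> nat) \<Rightarrow> (nat \<Rightarrow> nat \<Rightarrow> nat \<Rightarrow> point set) \<Rightarrow> bool" where
  "cond_D' M Z u k B \<longleftrightarrow>
    (\<lambda>n. \<Sum>Bs\<in>{B n s t | s t. s \<in> {1..k n} \<and> t \<in> {1..k n}}.
          \<Sum>(x, y)\<in>{(x, y). x \<in> Bs \<and> y \<in> Bs \<and> x \<noteq> y}.
             measure M {\<omega> \<in> space M. Z x \<omega> > u n \<and> Z y \<omega> > u n}) \<longlonglongrightarrow> 0"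

definition cond_D :: "'a measure \<Rightarrow> (point \<Rightarrow> 'a \<Rightarrow> real) \<Rightarrow> (nat \<Rightarrow> point set) \<Rightarrow>
    (nat \<Rightarrow> real) \<Rightarrow> (nat \<Rightarrow> nat) \<Rightarrow> (nat \<Rightarrow> nat) \<Rightarrow> bool" where
  "cond_D M Z A u k l \<longleftrightarrow>
    (\<forall>n. l n > 0 \<and> k n > 0) \<and> filterlim l at_top sequentially \<and> filterlim k at_top sequentially \<and>
    (\<lambda>n. real (k n) * real (l n) * real (card (fst ` A n)) / real (card (A n))) \<longlonglongrightarrow> 0 \<and>
    (\<lambda>n. real (k n) * real (l n) * real (card (snd ` A n)) / real (card (A n))) \<longlonglongrightarrow> 0 \<and>
    (\<lambda>n. real (k n)^2 * mixing_alpha M Z (A n) (l n) (u n)) \<longlonglongrightarrow> 0"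

end

theory Submission
  imports Defs
begin

text \<open>Write p_n = 1 - F(u_n) for the probability of an exceedance Z(x) > u_n. For a single
  block B, the union bound and the second Bonferroni inequality give
    1 - #B p_n <= P(max_B Z <= u_n) <= 1 - #B p_n + sum_{x /= y in B} P(Z(x) > u_n, Z(y) > u_n).
  Summed over the k_n^2 blocks, the error terms are exactly the quantity that D' sends to 0.
  The blocks have asymptotically equal sizes f(n)/k_n^2 and f(n) p_n -> tau (the expected number
  of exceedances), so the numbers #B p_n sum to tau in the limit while each is O(1/k_n^2); hence
  the product of the block probabilities behaves like prod (1 - #B p_n) -> exp(-tau). The assumed
  block approximation transfers this limit to A_n.\<close>

lemma (in finite_measure) measure_UN_ge_Bonferroni:
  assumes "finite C" and "\<And>x. x \<in> C \<Longrightarrow> E x \<in> sets M"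
  shows "(\<Sum>x\<in>C. measure M (E x)) - (\<Sum>x\<in>C. \<Sum>y\<in>C-{x}. measure M (E x \<inter> E y))
    \<le> measure M (\<Union>x\<in>C. E x)"
  using assms
proof (induction C rule: finite_induct)
  case empty
  then show ?case by simp
next
  case (insert a C)
  let ?U = "\<Union>x\<in>C. E x"
  have U: "?U \<in> sets M" using insert by (intro sets.finite_UN) auto
  have "measure M (E a \<inter> ?U) = measure M (\<Union>y\<in>C. E a \<inter> E y)"
    by (simp only: Int_UN_distrib)
  also have "\<dots> \<le> (\<Sum>y\<in>C. measure M (E a \<inter> E y))"
    using insert by (intro finite_measure_subadditive_finite) auto
  finally have overlap: "measure M (E a \<inter> ?U) \<le> (\<Sum>y\<in>C. measure M (E a \<inter> E y))" .
  have "measure M (E a \<union> ?U) = measure M (E a) + measure M ?U - measure M (E a \<inter> ?U)"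
    using insert U by (intro measure_Un3) (auto simp: fmeasurable_eq_sets)
  moreover have "(\<Sum>x\<in>C. \<Sum>y\<in>C-{x}. measure M (E x \<inter> E y))
      \<le> (\<Sum>x\<in>C. \<Sum>y\<in>insert a C-{x}. measure M (E x \<inter> E y))"
    using insert by (intro sum_mono sum_mono2) auto
  moreover have "insert a C - {a} = C" using insert by auto
  ultimately show ?case using insert overlap by simp
qed

lemma exp_neg_le_one_minus:
  fixes a m :: real
  assumes "0 \<le> a" "a \<le> m" "m \<le> 1/2"
  shows "exp (- ((1 + 2*m) * a)) \<le> 1 - a"
proof -
  have "- a - 2 * a\<^sup>2 \<le> ln (1 - a)" using assms by (intro ln_one_minus_pos_lower_bound) auto
  moreover have "a\<^sup>2 \<le> m * a" using assms by (simp add: power2_eq_square mult_right_mono)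
  ultimately have "- ((1 + 2*m) * a) \<le> ln (1 - a)" by (simp add: algebra_simps)
  then have "exp (- ((1 + 2*m) * a)) \<le> exp (ln (1 - a))" by simp
  also have "\<dots> = 1 - a" using assms by simp
  finally show ?thesis .
qed

lemma prod_one_minus_tendsto_exp:
  fixes a :: "nat \<Rightarrow> 'i \<Rightarrow> real" and m :: "nat \<Rightarrow> real"
  assumes fin: "\<And>n. finite (I n)" and a_nonneg: "\<And>n i. i \<in> I n \<Longrightarrow> 0 \<le> a n i"
    and sum_a: "(\<lambda>n. \<Sum>i\<in>I n. a n i) \<longlonglongrightarrow> \<tau>"
    and m_lim: "m \<longlonglongrightarrow> 0" and a_le_m: "eventually (\<lambda>n. \<forall>i\<in>I n. a n i \<le> m n) sequentially"
  shows "(\<lambda>n. \<Prod>i\<in>I n. 1 - a n i) \<longlonglongrightarrow> exp (- \<tau>)"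
proof (rule tendsto_sandwich)
  have "eventually (\<lambda>n. m n < 1/2) sequentially" using m_lim by (rule order_tendstoD) simp
  with a_le_m have small: "eventually (\<lambda>n. m n \<le> 1/2 \<and> (\<forall>i\<in>I n. a n i \<le> m n)) sequentially"
    by eventually_elim auto
  show "eventually (\<lambda>n. exp (- ((1 + 2 * m n) * (\<Sum>i\<in>I n. a n i))) \<le> (\<Prod>i\<in>I n. 1 - a n i))
      sequentially"
    using small
  proof eventually_elim
    case (elim n)
    have "exp (- ((1 + 2 * m n) * (\<Sum>i\<in>I n. a n i))) = (\<Prod>i\<in>I n. exp (- ((1 + 2 * m n) * a n i)))"
      using fin by (simp add: sum_distrib_left exp_sum[symmetric] sum_negf)
    also have "\<dots> \<le> (\<Prod>i\<in>I n. 1 - a n i)"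
      using elim a_nonneg by (intro prod_mono) (auto intro: exp_neg_le_one_minus)
    finally show ?case .
  qed
  show "eventually (\<lambda>n. (\<Prod>i\<in>I n. 1 - a n i) \<le> exp (- (\<Sum>i\<in>I n. a n i))) sequentially"
    using small
  proof eventually_elim
    case (elim n)
    have "(\<Prod>i\<in>I n. 1 - a n i) \<le> (\<Prod>i\<in>I n. exp (- a n i))"
      using elim a_nonneg by (intro prod_mono) (auto simp: exp_minus_ge)
    also have "\<dots> = exp (- (\<Sum>i\<in>I n. a n i))"
      using exp_sum[OF fin, of "\<lambda>i. - a n i" n] by (simp add: sum_negf)
    finally show ?case .
  qed
  have "(\<lambda>n. exp (- ((1 + 2 * m n) * (\<Sum>i\<in>I n. a n i)))) \<longlonglongrightarrow> exp (- ((1 + 2 * 0) * \<tau>))"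
    by (intro tendsto_intros sum_a m_lim)
  then show "(\<lambda>n. exp (- ((1 + 2 * m n) * (\<Sum>i\<in>I n. a n i)))) \<longlonglongrightarrow> exp (- \<tau>)"
    by simp
  show "(\<lambda>n. exp (- (\<Sum>i\<in>I n. a n i))) \<longlonglongrightarrow> exp (- \<tau>)"
    by (intro tendsto_intros sum_a)
qed

lemma prod_tendsto_exp_neg:
  fixes a e q :: "nat \<Rightarrow> 'i \<Rightarrow> real" and m :: "nat \<Rightarrow> real"
  assumes fin: "\<And>n. finite (I n)" and a_nonneg: "\<And>n i. i \<in> I n \<Longrightarrow> 0 \<le> a n i"
    and q_le_1: "\<And>n i. i \<in> I n \<Longrightarrow> q n i \<le> 1"
    and q_lower: "\<And>n i. i \<in> I n \<Longrightarrow> 1 - a n i \<le> q n i"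
    and q_upper: "\<And>n i. i \<in> I n \<Longrightarrow> q n i \<le> 1 - a n i + e n i"
    and sum_a: "(\<lambda>n. \<Sum>i\<in>I n. a n i) \<longlonglongrightarrow> \<tau>"
    and sum_e: "(\<lambda>n. \<Sum>i\<in>I n. e n i) \<longlonglongrightarrow> 0"
    and m_lim: "m \<longlonglongrightarrow> 0" and a_le_m: "eventually (\<lambda>n. \<forall>i\<in>I n. a n i \<le> m n) sequentially"
  shows "(\<lambda>n. \<Prod>i\<in>I n. q n i) \<longlonglongrightarrow> exp (- \<tau>)"
proof -
  have "eventually (\<lambda>n. m n < 1) sequentially" using m_lim by (rule order_tendstoD) simp
  with a_le_m have "eventually (\<lambda>n. \<bar>(\<Prod>i\<in>I n. q n i) - (\<Prod>i\<in>I n. 1 - a n i)\<bar>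
      \<le> (\<Sum>i\<in>I n. e n i)) sequentially"
  proof eventually_elim
    case (elim n)
    have "\<bar>(\<Prod>i\<in>I n. q n i) - (\<Prod>i\<in>I n. 1 - a n i)\<bar> \<le> (\<Sum>i\<in>I n. \<bar>q n i - (1 - a n i)\<bar>)"
      using norm_prod_diff[of "I n" "q n" "\<lambda>i. 1 - a n i"] elim a_nonneg q_le_1 q_lower
      by (force simp: abs_le_iff)
    also have "\<dots> \<le> (\<Sum>i\<in>I n. e n i)"
      using q_lower q_upper by (intro sum_mono) force
    finally show ?case .
  qed
  then have "(\<lambda>n. (\<Prod>i\<in>I n. q n i) - (\<Prod>i\<in>I n. 1 - a n i)) \<longlonglongrightarrow> 0"
    by (intro Lim_null_comparison[OF _ sum_e]) simp
  from tendsto_add[OF this prod_one_minus_tendsto_exp[OF fin a_nonneg sum_a m_lim a_le_m]]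
  show ?thesis by simp
qed

lemma sum_abs_diff_le_of_rel_err:
  fixes x :: "'i \<Rightarrow> real" and y d :: real
  assumes "finite I" and "0 < y" and "\<And>i. i \<in> I \<Longrightarrow> \<bar>x i / y - 1\<bar> < d"
  shows "\<bar>(\<Sum>i\<in>I. x i) - card I * y\<bar> \<le> d * (card I * y)"
proof -
  have "\<bar>x i - y\<bar> \<le> d * y" if "i \<in> I" for i
  proof -
    have "\<bar>x i - y\<bar> / y = \<bar>x i / y - 1\<bar>"
      using \<open>0 < y\<close> by (simp add: abs_div_pos diff_divide_distrib)
    then have "\<bar>x i - y\<bar> / y < d" using assms(3)[OF that] by simp
    then show ?thesis using \<open>0 < y\<close> by (simp add: pos_divide_less_eq)
  qed
  then have "(\<Sum>i\<in>I. \<bar>x i - y\<bar>) \<le> d * (card I * y)"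
    using sum_mono[of I "\<lambda>i. \<bar>x i - y\<bar>" "\<lambda>_. d * y"] by (simp add: algebra_simps)
  moreover have "\<bar>(\<Sum>i\<in>I. x i) - card I * y\<bar> \<le> (\<Sum>i\<in>I. \<bar>x i - y\<bar>)"
    using sum_abs[of "\<lambda>i. x i - y" I] by (simp add: sum_subtractf)
  ultimately show ?thesis by linarith
qed

lemma sum_tendsto_of_rel_err:
  fixes b :: "nat \<Rightarrow> 'i \<Rightarrow> real" and c p :: "nat \<Rightarrow> real"
  assumes fin: "\<And>n. finite (I n)" and I_ne: "\<And>n. I n \<noteq> {}"
    and c_pos: "eventually (\<lambda>n. 0 < c n) sequentially"
    and rel_err: "\<And>d. 0 < d \<Longrightarrow>
      eventually (\<lambda>n. \<forall>i\<in>I n. \<bar>b n i / (c n / card (I n)) - 1\<bar> < d) sequentially"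
    and cp: "(\<lambda>n. c n * p n) \<longlonglongrightarrow> \<tau>"
  shows "(\<lambda>n. \<Sum>i\<in>I n. b n i * p n) \<longlonglongrightarrow> \<tau>"
proof -
  have card_pos: "0 < card (I n)" for n using fin I_ne by (simp add: card_gt_0_iff)
  have "(\<lambda>n. (\<Sum>i\<in>I n. b n i) / c n) \<longlonglongrightarrow> 1"
  proof (rule tendstoI)
    fix \<epsilon> :: real assume "0 < \<epsilon>"
    then have "0 < \<epsilon> / 2" by simp
    show "eventually (\<lambda>n. dist ((\<Sum>i\<in>I n. b n i) / c n) 1 < \<epsilon>) sequentially"
      using c_pos rel_err[OF \<open>0 < \<epsilon> / 2\<close>]
    proof eventually_elim
      case (elim n)
      then have "\<bar>(\<Sum>i\<in>I n. b n i) - card (I n) * (c n / card (I n))\<bar>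
          \<le> \<epsilon> / 2 * (card (I n) * (c n / card (I n)))"
        using card_pos[of n] by (intro sum_abs_diff_le_of_rel_err fin) auto
      then have "\<bar>(\<Sum>i\<in>I n. b n i) - c n\<bar> \<le> \<epsilon> / 2 * c n"
        using card_pos[of n] by simp
      then have "\<bar>(\<Sum>i\<in>I n. b n i) - c n\<bar> / c n \<le> \<epsilon> / 2"
        using elim by (simp add: divide_le_eq)
      moreover have "\<bar>(\<Sum>i\<in>I n. b n i) / c n - 1\<bar> = \<bar>(\<Sum>i\<in>I n. b n i) - c n\<bar> / c n"
        using elim by (simp add: abs_div_pos diff_divide_distrib)
      ultimately show ?case using \<open>0 < \<epsilon>\<close> unfolding dist_real_def by linarith
    qed
  qed
  from tendsto_mult[OF this cp] have "(\<lambda>n. (\<Sum>i\<in>I n. b n i) / c n * (c n * p n)) \<longlonglongrightarrow> \<tau>"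
    by simp
  moreover have "eventually (\<lambda>n. (\<Sum>i\<in>I n. b n i) / c n * (c n * p n) = (\<Sum>i\<in>I n. b n i * p n))
      sequentially"
    using c_pos by eventually_elim (simp add: sum_distrib_right[symmetric])
  ultimately show ?thesis using tendsto_cong by fast
qed

lemma uniformly_small_of_rel_err:
  fixes b :: "nat \<Rightarrow> 'i \<Rightarrow> real" and c p :: "nat \<Rightarrow> real"
  assumes card_I: "filterlim (\<lambda>n. card (I n)) at_top sequentially"
    and c_pos: "eventually (\<lambda>n. 0 < c n) sequentially" and p_nonneg: "\<And>n. 0 \<le> p n"
    and rel_err: "\<And>d. 0 < d \<Longrightarrow>
      eventually (\<lambda>n. \<forall>i\<in>I n. \<bar>b n i / (c n / card (I n)) - 1\<bar> < d) sequentially"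
    and cp: "(\<lambda>n. c n * p n) \<longlonglongrightarrow> \<tau>"
  shows "eventually (\<lambda>n. \<forall>i\<in>I n. b n i * p n \<le> 2 * (c n * p n) / card (I n)) sequentially"
    and "(\<lambda>n. 2 * (c n * p n) / card (I n)) \<longlonglongrightarrow> 0"
proof -
  have "filterlim (\<lambda>n. real (card (I n))) at_top sequentially"
    using filterlim_compose[OF filterlim_real_sequentially card_I] by (simp add: o_def)
  then show "(\<lambda>n. 2 * (c n * p n) / card (I n)) \<longlonglongrightarrow> 0"
    by (intro tendsto_divide_0[OF tendsto_mult[OF tendsto_const cp]]
        filterlim_at_top_imp_at_infinity)
  show "eventually (\<lambda>n. \<forall>i\<in>I n. b n i * p n \<le> 2 * (c n * p n) / card (I n)) sequentially"
    using c_pos rel_err[OF zero_less_one]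
  proof eventually_elim
    case (elim n)
    show ?case
    proof
      fix i assume "i \<in> I n"
      then have "b n i \<le> 2 * c n / card (I n)"
        using elim by (cases "card (I n) = 0")
          (auto simp: abs_less_iff divide_less_eq pos_le_divide_eq)
      then have "b n i * p n \<le> 2 * c n / card (I n) * p n"
        using p_nonneg by (rule mult_right_mono)
      then show "b n i * p n \<le> 2 * (c n * p n) / card (I n)"
        by (simp add: mult.assoc)
    qed
  qed
qed

lemma sum_off_diagonal:
  assumes "finite S"
  shows "(\<Sum>(x, y)\<in>{(x, y). x \<in> S \<and> y \<in> S \<and> x \<noteq> y}. f x y) = (\<Sum>x\<in>S. \<Sum>y\<in>S - {x}. f x y)"
proof -
  have "{(x, y). x \<in> S \<and> y \<in> S \<and> x \<noteq> y} = Sigma S (\<lambda>x. S - {x})" by auto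
  then show ?thesis using assms by (simp add: sum.Sigma)
qed

lemma sum_image_disjoint_family:
  assumes "finite I" and "\<And>i j. i \<in> I \<Longrightarrow> j \<in> I \<Longrightarrow> i \<noteq> j \<Longrightarrow> B i \<inter> B j = {}"
    and "g {} = 0"
  shows "(\<Sum>S\<in>B ` I. g S) = (\<Sum>i\<in>I. g (B i))"
proof -
  have "(\<Sum>S\<in>B ` I. g S) = (\<Sum>i\<in>I. (g \<circ> B) i)"
  proof (rule sum.reindex_nontrivial[OF assms(1)])
    fix i j assume "i \<in> I" "j \<in> I" "i \<noteq> j" "B i = B j"
    then have "B i = {}" using assms(2) by blast
    then show "g (B i) = 0" using assms(3) by simp
  qed
  then show ?thesis by simp
qed

lemma max_le_event_eq_compl:
  "max_le_event M Z C u = space M - (\<Union>x\<in>C. {\<omega> \<in> space M. Z x \<omega> > u})"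
  unfolding max_le_event_def by auto

lemma cond_D'_tendsto_block_sum:
  assumes "cond_D' M Z u k B"
    and fin: "\<And>n s t. s \<in> {1..k n} \<Longrightarrow> t \<in> {1..k n} \<Longrightarrow> finite (B n s t)"
    and disj: "\<And>n s t s' t'. s \<in> {1..k n} \<Longrightarrow> t \<in> {1..k n} \<Longrightarrow> s' \<in> {1..k n} \<Longrightarrow>
      t' \<in> {1..k n} \<Longrightarrow> (s, t) \<noteq> (s', t') \<Longrightarrow> B n s t \<inter> B n s' t' = {}"
  shows "(\<lambda>n. \<Sum>i\<in>{1..k n} \<times> {1..k n}. \<Sum>x\<in>case_prod (B n) i. \<Sum>y\<in>case_prod (B n) i - {x}.
    measure M {\<omega> \<in> space M. Z x \<omega> > u n \<and> Z y \<omega> > u n}) \<longlonglongrightarrow> 0"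
proof -
  let ?g = "\<lambda>n S. \<Sum>(x, y)\<in>{(x, y). x \<in> S \<and> y \<in> S \<and> x \<noteq> y}.
    measure M {\<omega> \<in> space M. Z x \<omega> > u n \<and> Z y \<omega> > u n}"
  have "(\<Sum>S\<in>{B n s t | s t. s \<in> {1..k n} \<and> t \<in> {1..k n}}. ?g n S)
      = (\<Sum>i\<in>{1..k n} \<times> {1..k n}. ?g n (case_prod (B n) i))" for n
  proof -
    have "{B n s t | s t. s \<in> {1..k n} \<and> t \<in> {1..k n}} = case_prod (B n) ` ({1..k n} \<times> {1..k n})"
      by force
    moreover have "(\<Sum>S\<in>case_prod (B n) ` ({1..k n} \<times> {1..k n}). ?g n S)
        = (\<Sum>i\<in>{1..k n} \<times> {1..k n}. ?g n (case_prod (B n) i))"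
    proof (rule sum_image_disjoint_family)
      fix i j assume "i \<in> {1..k n} \<times> {1..k n}" "j \<in> {1..k n} \<times> {1..k n}" "i \<noteq> j"
      then show "case_prod (B n) i \<inter> case_prod (B n) j = {}"
        using disj[of "fst i" n "snd i" "fst j" "snd j"]
        by (simp add: case_prod_beta mem_Times_iff prod_eq_iff)
    qed auto
    ultimately show ?thesis by simp
  qed
  also have "?g n (case_prod (B n) i) = (\<Sum>x\<in>case_prod (B n) i. \<Sum>y\<in>case_prod (B n) i - {x}.
      measure M {\<omega> \<in> space M. Z x \<omega> > u n \<and> Z y \<omega> > u n})" if "i \<in> {1..k n} \<times> {1..k n}" for n i
    using fin that by (intro sum_off_diagonal) auto
  ultimately show ?thesis using assms(1) unfolding cond_D'_def by simp
qed

context prob_space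
begin

lemma measure_max_le_event_bounds:
  fixes u p :: real
  assumes fin: "finite C" and Z_rv: "\<And>x. x \<in> C \<Longrightarrow> Z x \<in> borel_measurable M"
    and exceed: "\<And>x. x \<in> C \<Longrightarrow> prob {\<omega> \<in> space M. Z x \<omega> > u} = p"
  shows "1 - card C * p \<le> prob (max_le_event M Z C u)"
    and "prob (max_le_event M Z C u)
      \<le> 1 - card C * p + (\<Sum>x\<in>C. \<Sum>y\<in>C - {x}. prob {\<omega> \<in> space M. Z x \<omega> > u \<and> Z y \<omega> > u})"
proof -
  define E where "E x = {\<omega> \<in> space M. Z x \<omega> > u}" for x
  have E: "E x \<in> sets M" if "x \<in> C" for x
    using Z_rv[OF that] unfolding E_def borel_measurable_iff_greater by auto
  have "prob (max_le_event M Z C u) = 1 - prob (\<Union>x\<in>C. E x)"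
    unfolding max_le_event_eq_compl E_def[symmetric] using fin E by (intro prob_compl) auto
  moreover have "(\<Sum>x\<in>C. prob (E x)) = card C * p"
    using exceed by (simp add: E_def)
  moreover have "E x \<inter> E y = {\<omega> \<in> space M. Z x \<omega> > u \<and> Z y \<omega> > u}" for x y
    unfolding E_def by auto
  moreover have "prob (\<Union>x\<in>C. E x) \<le> (\<Sum>x\<in>C. prob (E x))"
    using fin E by (intro finite_measure_subadditive_finite) auto
  moreover have "(\<Sum>x\<in>C. prob (E x)) - (\<Sum>x\<in>C. \<Sum>y\<in>C - {x}. prob (E x \<inter> E y))
      \<le> prob (\<Union>x\<in>C. E x)"
    using fin E by (rule measure_UN_ge_Bonferroni)
  ultimately show "1 - card C * p \<le> prob (max_le_event M Z C u)"
    and "prob (max_le_event M Z C u)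
      \<le> 1 - card C * p + (\<Sum>x\<in>C. \<Sum>y\<in>C - {x}. prob {\<omega> \<in> space M. Z x \<omega> > u \<and> Z y \<omega> > u})"
    by simp_all
qed

lemma prob_exceed_eq:
  fixes X :: "'a \<Rightarrow> real"
  assumes "X \<in> borel_measurable M" and "\<And>t. prob {\<omega> \<in> space M. X \<omega> \<le> t} = F t"
  shows "prob {\<omega> \<in> space M. X \<omega> > t} = 1 - F t"
proof -
  have "{\<omega> \<in> space M. X \<omega> > t} = space M - {\<omega> \<in> space M. X \<omega> \<le> t}" by auto
  moreover have "{\<omega> \<in> space M. X \<omega> \<le> t} \<in> events"
    using assms(1) by (auto simp: borel_measurable_iff_le)
  ultimately show ?thesis using prob_compl assms(2) by simp
qed

lemma expectation_count_exceedances: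
  fixes u p :: real
  assumes Z_rv: "\<And>x. x \<in> C \<Longrightarrow> Z x \<in> borel_measurable M"
    and exceed: "\<And>x. x \<in> C \<Longrightarrow> prob {\<omega> \<in> space M. Z x \<omega> > u} = p"
  shows "expectation (\<lambda>\<omega>. \<Sum>x\<in>C. indicator {\<omega>'. Z x \<omega>' > u} \<omega>) = card C * p"
proof -
  define E where "E x = {\<omega> \<in> space M. Z x \<omega> > u}" for x
  have E: "E x \<in> sets M" if "x \<in> C" for x
    using Z_rv[OF that] unfolding E_def borel_measurable_iff_greater by auto
  have "expectation (\<lambda>\<omega>. \<Sum>x\<in>C. indicator {\<omega>'. Z x \<omega>' > u} \<omega>)
      = expectation (\<lambda>\<omega>. \<Sum>x\<in>C. indicator (E x) \<omega> :: real)"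
    by (intro Bochner_Integration.integral_cong) (auto simp: E_def indicator_def)
  also have "\<dots> = (\<Sum>x\<in>C. prob (E x))"
    using E by (subst Bochner_Integration.integral_sum) (auto simp: less_top[symmetric])
  also have "\<dots> = card C * p"
    using exceed by (simp add: E_def)
  finally show ?thesis .
qed

lemma prod_max_le_event_tendsto_exp:
  fixes C :: "nat \<Rightarrow> 'i \<Rightarrow> point set" and p m :: "nat \<Rightarrow> real"
  assumes fin_I: "\<And>n. finite (I n)" and fin_C: "\<And>n i. i \<in> I n \<Longrightarrow> finite (C n i)"
    and Z_rv: "\<And>n i x. i \<in> I n \<Longrightarrow> x \<in> C n i \<Longrightarrow> Z x \<in> borel_measurable M"
    and exceed: "\<And>n i x. i \<in> I n \<Longrightarrow> x \<in> C n i \<Longrightarrow> prob {\<omega> \<in> space M. Z x \<omega> > u n} = p n"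
    and p_nonneg: "\<And>n. 0 \<le> p n"
    and mean: "(\<lambda>n. \<Sum>i\<in>I n. card (C n i) * p n) \<longlonglongrightarrow> \<tau>"
    and m_lim: "m \<longlonglongrightarrow> 0" and small: "eventually (\<lambda>n. \<forall>i\<in>I n. card (C n i) * p n \<le> m n) sequentially"
    and pairs: "(\<lambda>n. \<Sum>i\<in>I n. \<Sum>x\<in>C n i. \<Sum>y\<in>C n i - {x}.
      prob {\<omega> \<in> space M. Z x \<omega> > u n \<and> Z y \<omega> > u n}) \<longlonglongrightarrow> 0"
  shows "(\<lambda>n. \<Prod>i\<in>I n. prob (max_le_event M Z (C n i) (u n))) \<longlonglongrightarrow> exp (- \<tau>)"
proof (rule prod_tendsto_exp_neg[OF fin_I _ _ _ _ mean pairs m_lim small])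
  fix n i assume i: "i \<in> I n"
  note bounds = measure_max_le_event_bounds[OF fin_C[OF i] Z_rv[OF i] exceed[OF i]]
  show "1 - card (C n i) * p n \<le> prob (max_le_event M Z (C n i) (u n))"
    by (rule bounds(1))
  show "prob (max_le_event M Z (C n i) (u n)) \<le> 1 - card (C n i) * p n
      + (\<Sum>x\<in>C n i. \<Sum>y\<in>C n i - {x}. prob {\<omega> \<in> space M. Z x \<omega> > u n \<and> Z y \<omega> > u n})"
    by (rule bounds(2))
  show "0 \<le> card (C n i) * p n" using p_nonneg by simp
qed simp

lemma prod_grid_max_le_event_tendsto_exp:
  fixes B :: "nat \<Rightarrow> nat \<Rightarrow> nat \<Rightarrow> point set" and c p :: "nat \<Rightarrow> real"
  assumes fin: "\<And>n s t. s \<in> {1..k n} \<Longrightarrow> t \<in> {1..k n} \<Longrightarrow> finite (B n s t)"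
    and Z_rv: "\<And>n s t x. s \<in> {1..k n} \<Longrightarrow> t \<in> {1..k n} \<Longrightarrow> x \<in> B n s t \<Longrightarrow>
      Z x \<in> borel_measurable M"
    and exceed: "\<And>n s t x. s \<in> {1..k n} \<Longrightarrow> t \<in> {1..k n} \<Longrightarrow> x \<in> B n s t \<Longrightarrow>
      prob {\<omega> \<in> space M. Z x \<omega> > u n} = p n"
    and p_nonneg: "\<And>n. 0 \<le> p n"
    and k_pos: "\<And>n. 0 < k n" and k_top: "filterlim k at_top sequentially"
    and c_pos: "eventually (\<lambda>n. 0 < c n) sequentially"
    and mean: "(\<lambda>n. c n * p n) \<longlonglongrightarrow> \<tau>"
    and size: "\<And>d. 0 < d \<Longrightarrow> eventually (\<lambda>n. \<forall>s\<in>{1..k n}. \<forall>t\<in>{1..k n}.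
      \<bar>real (card (B n s t)) / (c n / real (k n)^2) - 1\<bar> < d) sequentially"
    and disj: "\<And>n s t s' t'. s \<in> {1..k n} \<Longrightarrow> t \<in> {1..k n} \<Longrightarrow> s' \<in> {1..k n} \<Longrightarrow>
      t' \<in> {1..k n} \<Longrightarrow> (s, t) \<noteq> (s', t') \<Longrightarrow> B n s t \<inter> B n s' t' = {}"
    and D': "cond_D' M Z u k B"
  shows "(\<lambda>n. \<Prod>s\<in>{1..k n}. \<Prod>t\<in>{1..k n}. prob (max_le_event M Z (B n s t) (u n)))
    \<longlonglongrightarrow> exp (- \<tau>)"
proof -
  define I where "I n = {1..k n} \<times> {1..k n}" for n
  define C where "C n = case_prod (B n)" for n
  have fin_I: "finite (I n)" and I_ne: "I n \<noteq> {}" for n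
    using k_pos[of n] by (auto simp: I_def)
  have card_I: "card (I n) = k n ^ 2" for n
    by (simp add: I_def power2_eq_square)
  have card_I_top: "filterlim (\<lambda>n. card (I n)) at_top sequentially"
    unfolding card_I by (rule filterlim_at_top_mono[OF k_top])
      (auto simp: power2_eq_square k_pos Suc_le_eq intro: always_eventually)
  have rel_err: "eventually (\<lambda>n. \<forall>i\<in>I n.
      \<bar>real (card (C n i)) / (c n / card (I n)) - 1\<bar> < d) sequentially" if "0 < d" for d
    unfolding card_I of_nat_power using size[OF that] by eventually_elim (auto simp: I_def C_def)
  note small = uniformly_small_of_rel_err[OF card_I_top c_pos p_nonneg rel_err mean]
  have "(\<lambda>n. \<Prod>i\<in>I n. prob (max_le_event M Z (C n i) (u n))) \<longlonglongrightarrow> exp (- \<tau>)"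
  proof (rule prod_max_le_event_tendsto_exp[OF fin_I _ _ _ p_nonneg _ small(2,1)])
    show "(\<lambda>n. \<Sum>i\<in>I n. real (card (C n i)) * p n) \<longlonglongrightarrow> \<tau>"
      by (rule sum_tendsto_of_rel_err[OF fin_I I_ne c_pos rel_err mean])
    show "(\<lambda>n. \<Sum>i\<in>I n. \<Sum>x\<in>C n i. \<Sum>y\<in>C n i - {x}.
        prob {\<omega> \<in> space M. Z x \<omega> > u n \<and> Z y \<omega> > u n}) \<longlonglongrightarrow> 0"
      unfolding I_def C_def by (rule cond_D'_tendsto_block_sum[OF D' fin disj])
  qed (auto simp: I_def C_def intro: fin Z_rv exceed)
  then show ?thesis
    unfolding I_def C_def by (simp add: prod.cartesian_product case_prod_beta')
qed

end

theorem proposition3p2: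
  fixes M :: "'a measure" and Z :: "point \<Rightarrow> 'a \<Rightarrow> real" and F :: "real \<Rightarrow> real"
    and A :: "nat \<Rightarrow> point set" and \<tau> :: real and u :: "nat \<Rightarrow> real"
    and k :: "nat \<Rightarrow> nat" and l :: "nat \<Rightarrow> nat"
    and B :: "nat \<Rightarrow> nat \<Rightarrow> nat \<Rightarrow> point set"
  assumes P: "prob_space M"
    and A_mono: "\<And>n. A n \<subseteq> A (Suc n)"
    and A_fin: "\<And>n. finite (A n)"
    and A_card: "filterlim (\<lambda>n. card (A n)) at_top sequentially"
    and isolated: "\<And>x. x \<in> (\<Union>n. A n) \<Longrightarrow> \<not> x islimpt (\<Union>n. A n)"
    and Z_rv: "\<And>x. x \<in> (\<Union>n. A n) \<Longrightarrow> Z x \<in> borel_measurable M"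
    and Z_F: "\<And>x t. x \<in> (\<Union>n. A n) \<Longrightarrow> measure M {\<omega> \<in> space M. Z x \<omega> \<le> t} = F t"
    and tau_pos: "\<tau> > 0"
    and u_exp: "(\<lambda>n. integral\<^sup>L M (\<lambda>\<omega>. \<Sum>x\<in>A n. indicator {\<omega>'. Z x \<omega>' > u n} \<omega>)) \<longlonglongrightarrow> \<tau>"
    and B_sub: "\<And>n s t. s \<in> {1..k n} \<Longrightarrow> t \<in> {1..k n} \<Longrightarrow> B n s t \<subseteq> A n"
    and B_disj: "\<And>n s t s' t'. s \<in> {1..k n} \<Longrightarrow> t \<in> {1..k n} \<Longrightarrow> s' \<in> {1..k n} \<Longrightarrow>
        t' \<in> {1..k n} \<Longrightarrow> (s, t) \<noteq> (s', t') \<Longrightarrow> B n s t \<inter> B n s' t' = {}"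
    and B_card: "\<And>e. e > 0 \<Longrightarrow> eventually (\<lambda>n. \<forall>s\<in>{1..k n}. \<forall>t\<in>{1..k n}.
        \<bar>real (card (B n s t)) / (real (card (A n)) / real (k n)^2) - 1\<bar> < e) sequentially"
    and B_approx: "(\<lambda>n. measure M (max_le_event M Z (A n) (u n))
        - (\<Prod>s\<in>{1..k n}. \<Prod>t\<in>{1..k n}. measure M (max_le_event M Z (B n s t) (u n)))) \<longlonglongrightarrow> 0"
    and D': "cond_D' M Z u k B"
    and D: "cond_D M Z A u k l"
  shows "(\<lambda>n. measure M (max_le_event M Z (A n) (u n))) \<longlonglongrightarrow> exp (- \<tau>)"
proof -
  interpret prob_space M by (rule P)
  define p where "p n = 1 - F (u n)" for n
  have A_rv: "Z x \<in> borel_measurable M" if "x \<in> A n" for x n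
    using Z_rv that by blast
  have A_exceed: "prob {\<omega> \<in> space M. Z x \<omega> > u m} = p m" if "x \<in> A n" for x n m
    unfolding p_def using that by (intro prob_exceed_eq A_rv Z_F) auto
  have "eventually (\<lambda>n. 1 \<le> card (A n)) sequentially"
    using A_card unfolding filterlim_at_top by blast
  then have A_pos: "eventually (\<lambda>n. 0 < real (card (A n))) sequentially"
    by eventually_elim simp
  then obtain n0 where "0 < card (A n0)" by (auto simp: eventually_sequentially)
  then obtain x0 where "x0 \<in> A n0" by (auto simp: card_gt_0_iff)
  then have p_nonneg: "0 \<le> p n" for n using A_exceed by (metis measure_nonneg)
  have "expectation (\<lambda>\<omega>. \<Sum>x\<in>A n. indicator {\<omega>'. Z x \<omega>' > u n} \<omega>) = card (A n) * p n" for n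
    using A_rv A_exceed by (rule expectation_count_exceedances)
  with u_exp have mean_A: "(\<lambda>n. real (card (A n)) * p n) \<longlonglongrightarrow> \<tau>"
    by simp
  have k_pos: "\<And>n. 0 < k n" and k_top: "filterlim k at_top sequentially"
    using D unfolding cond_D_def by blast+
  have "(\<lambda>n. \<Prod>s\<in>{1..k n}. \<Prod>t\<in>{1..k n}. prob (max_le_event M Z (B n s t) (u n))) \<longlonglongrightarrow> exp (- \<tau>)"
    using B_sub A_rv A_exceed
    by (intro prod_grid_max_le_event_tendsto_exp[OF finite_subset[OF B_sub A_fin] _ _ p_nonneg
          k_pos k_top A_pos mean_A B_card B_disj D']) blast+
  from tendsto_add[OF B_approx this] show ?thesis by simp
qed

end
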